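(* Let $a\ge1$ and $n\ge 2a+1$, and let $\sigma\in S(n;a)$. Then $T_i(\sigma)\in S(n+1;a+1)$ for all $i$.
   Context: For $m\ge a$, $S(m;a)$ denotes the subgroup of $S_m$ generated by all permutations of $\{1,\dots,a\}$ and all permutations of $\{m-a+1,\dots,m\}$. For $\sigma\in S_n$ let $f_\sigma=x_1\cdots x_n-x_{\sigma(1)}\cdots x_{\sigma(n)}$ in the free associative algebra. For $1\le i\le n$ put $T_i(f_\sigma)=f_\sigma(x_1,\dots,x_{i-1},x_ix_{i+1},x_{i+2},\dots,x_{n+1})$; also $T_0(f_\sigma)=x_1f_\sigma(x_2,\dots,x_{n+1})$ and $T_{n+1}(f_\sigma)=f_\sigma(x_1,\dots,x_n)x_{n+1}$. Each $T_i(f_\sigma)$ equals $x_1\cdots x_{n+1}-x_{\tau(1)}\cdots x_{\tau(n+1)}$ for a unique $\tau\in S_{n+1}$, and $T_i(\sigma)$ denotes this $\tau$. *)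

theory Defs
  imports "HOL-Combinatorics.Permutations"
begin

text \<open>Permutations in S_m are functions nat => nat that permute {1..m}
  (and fix everything else).\<close>

inductive_set S_sub :: "nat \<Rightarrow> nat \<Rightarrow> (nat \<Rightarrow> nat) set" for m a :: nat where
  S_id: "id \<in> S_sub m a"
| S_gen_left: "p permutes {1..a} \<Longrightarrow> p \<in> S_sub m a"
| S_gen_right: "p permutes {m - a + 1..m} \<Longrightarrow> p \<in> S_sub m a"
| S_comp: "p \<in> S_sub m a \<Longrightarrow> q \<in> S_sub m a \<Longrightarrow> p \<circ> q \<in> S_sub m a"
| S_inv: "p \<in> S_sub m a \<Longrightarrow> inv p \<in> S_sub m a"

text \<open>A monomial x_{w_1}...x_{w_k} of the free associative algebra is encoded
  by the word w (a list of variable indices).\<close>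
definition subst_var :: "nat \<Rightarrow> nat \<Rightarrow> nat list" where
  "subst_var i j = (if j < i then [j] else if j = i then [i, Suc i] else [Suc j])"

text \<open>Word of the second monomial of f_sigma, i.e. x_{sigma(1)}...x_{sigma(n)}.\<close>
definition perm_word :: "nat \<Rightarrow> (nat \<Rightarrow> nat) \<Rightarrow> nat list" where
  "perm_word n \<sigma> = map \<sigma> [1..<n+1]"

text \<open>Word of the second monomial of T_i(f_sigma), for 0 <= i <= n+1.
  The first monomial x_1...x_n is sent to x_1...x_{n+1} in every case.\<close>
definition T_word :: "nat \<Rightarrow> nat \<Rightarrow> (nat \<Rightarrow> nat) \<Rightarrow> nat list" where
  "T_word n i \<sigma> =
     (if i = 0 then 1 # map Suc (perm_word n \<sigma>)
      else if i = n + 1 then perm_word n \<sigma> @ [n + 1]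
      else concat (map (subst_var i) (perm_word n \<sigma>)))"

text \<open>T_i(sigma): the permutation tau of {1..n+1} with
  x_{tau(1)}...x_{tau(n+1)} the second monomial of T_i(f_sigma).\<close>
definition T_perm :: "nat \<Rightarrow> nat \<Rightarrow> (nat \<Rightarrow> nat) \<Rightarrow> (nat \<Rightarrow> nat)" where
  "T_perm n i \<sigma> = (\<lambda>k. if 1 \<le> k \<and> k \<le> n + 1 then T_word n i \<sigma> ! (k - 1) else k)"

end

theory Submission
  imports Defs
begin

text \<open>For \<open>2 * a \<le> m\<close> the two generating blocks of S(m;a) are disjoint, so S(m;a)
  consists exactly of the permutations of {1..m} that map {1..a} onto itself and fix every k
  with \<open>a < k \<le> m - a\<close>. In one-line notation these are the words u (a+1) (a+2) ... (m-a) v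
  with set u = {1..a}. The word of T_i(\<sigma>) arises from that of \<sigma> by prepending 1 and shifting
  all letters up (i = 0), by appending n+1 (i = n+1), or by replacing the letter i with i, i+1
  and shifting the letters above i. Either the prefix u gains the new letter and the run is
  shifted up, or u is unchanged and absorbs the first letter a+1 of the run. In both cases the
  word has the same shape for a+1, with the run still ending at n - a = (n+1) - (a+1).\<close>

definition block_perm :: "nat \<Rightarrow> nat \<Rightarrow> (nat \<Rightarrow> nat) \<Rightarrow> bool" where
  "block_perm m a t \<longleftrightarrow>
     t permutes {1..m} \<and> t ` {1..a} = {1..a} \<and> (\<forall>k \<in> {a<..m - a}. t k = k)"

lemma S_sub_imp_block_perm:
  assumes "t \<in> S_sub m a" and "2 * a \<le> m"
  shows "block_perm m a t"
  using assms(1)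
proof induction
  case S_id
  show ?case by (simp add: block_perm_def flip: id_def)
next
  case (S_gen_left p)
  with assms(2) show ?case
    by (auto simp: block_perm_def permutes_image permutes_not_in intro: permutes_subset)
next
  case (S_gen_right p)
  have "p k = k" if "k \<le> m - a" for k
    using that by (intro permutes_not_in[OF S_gen_right]) auto
  moreover from this have "p ` {1..a} = (\<lambda>k. k) ` {1..a}"
    using assms(2) by (intro image_cong) auto
  ultimately show ?case using S_gen_right assms(2)
    by (auto simp: block_perm_def intro: permutes_subset)
next
  case (S_comp p q)
  then have p: "p permutes {1..m}" "p ` {1..a} = {1..a}" "\<forall>k \<in> {a<..m - a}. p k = k"
    and q: "q permutes {1..m}" "q ` {1..a} = {1..a}" "\<forall>k \<in> {a<..m - a}. q k = k"
    by (simp_all add: block_perm_def)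
  have "(p \<circ> q) ` {1..a} = {1..a}"
    using p(2) q(2) by (metis image_comp)
  moreover have "\<forall>k \<in> {a<..m - a}. (p \<circ> q) k = k"
    using p(3) q(3) by simp
  ultimately show ?case
    unfolding block_perm_def using permutes_compose[OF q(1) p(1)] by blast
next
  case (S_inv p)
  then have p: "p permutes {1..m}" "p ` {1..a} = {1..a}"
    by (simp_all add: block_perm_def)
  have "inv p ` {1..a} = {1..a}"
    using p by (metis image_inv_f_f permutes_inj)
  with S_inv p show ?case
    by (auto simp: block_perm_def permutes_inv permutes_inv_eq)
qed

lemma block_perm_imp_S_sub:
  assumes "block_perm m a t" and "a \<le> m"
  shows "t \<in> S_sub m a"
proof -
  define L where "L = {1..a}"
  define R where "R = {1..m} - L"
  have t: "t permutes {1..m}" "t ` L = L" "\<And>k. a < k \<Longrightarrow> k \<le> m - a \<Longrightarrow> t k = k"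
    using assms by (auto simp: block_perm_def L_def)
  have "bij_betw t L L"
    using t by (simp add: bij_betw_def permutes_inj_on)
  then have left: "restrict_id t L permutes L"
    by (rule permutes_restrict_id)
  have "bij_betw t R R"
    unfolding R_def using permutes_imp_bij[OF t(1)] \<open>bij_betw t L L\<close>
    by (rule bij_betw_DiffI) (use assms(2) in \<open>auto simp: L_def\<close>)
  then have "restrict_id t R permutes R"
    by (rule permutes_restrict_id)
  then have right: "restrict_id t R permutes {m - a + 1..m}"
    by (rule permutes_superset) (auto simp: R_def L_def t(3))
  have "t = restrict_id t L \<circ> restrict_id t R"
  proof
    fix k
    have "t k \<in> L \<longleftrightarrow> k \<in> L"
      by (metis t(1,2) inj_image_mem_iff permutes_inj)
    then show "t k = (restrict_id t L \<circ> restrict_id t R) k"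
      using permutes_not_in[OF t(1), of k] permutes_in_image[OF t(1), of k]
      by (cases "k \<in> L"; cases "k \<in> R") (auto simp: R_def)
  qed
  with left right show ?thesis
    unfolding L_def by (metis S_comp S_gen_left S_gen_right)
qed

definition word_perm :: "nat list \<Rightarrow> nat \<Rightarrow> nat" where
  "word_perm w k = (if 1 \<le> k \<and> k \<le> length w then w ! (k - 1) else k)"

lemma word_perm_permutes:
  assumes "distinct w" and "set w = {1..m}"
  shows "word_perm w permutes {1..m}"
proof -
  have len: "length w = m"
    using distinct_card[OF assms(1)] assms(2) by simp
  have "bij_betw (\<lambda>k. k - 1) {1..m} {..<m}"
    by (rule bij_betwI[where g = Suc]) auto
  moreover have "bij_betw ((!) w) {..<m} {1..m}"
    using assms len by (intro bij_betw_nth) auto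
  ultimately have "bij_betw ((!) w \<circ> (\<lambda>k. k - 1)) {1..m} {1..m}"
    by (rule bij_betw_trans)
  then have "bij_betw (word_perm w) {1..m} {1..m}"
    by (rule bij_betw_cong[THEN iffD1, rotated]) (simp add: word_perm_def len)
  then show ?thesis
    by (rule bij_imp_permutes) (auto simp: word_perm_def len)
qed

definition block_word :: "nat \<Rightarrow> nat \<Rightarrow> nat list \<Rightarrow> bool" where
  "block_word b c w \<longleftrightarrow> (\<exists>u v. w = u @ [Suc b..<Suc c] @ v \<and> set u = {1..b})"

lemma word_perm_block_perm:
  assumes "distinct w" and "set w = {1..m}" and "block_word b (m - b) w"
  shows "block_perm m b (word_perm w)"
proof -
  obtain u v where w: "w = u @ [Suc b..<Suc (m - b)] @ v" and u: "set u = {1..b}"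
    using assms(3) by (auto simp: block_word_def)
  have len: "length w = m"
    using distinct_card[OF assms(1)] assms(2) by simp
  have len_u: "length u = b"
    using distinct_card[of u] assms(1) u w by simp
  have perm: "word_perm w permutes {1..m}"
    using assms(1,2) by (rule word_perm_permutes)
  have "word_perm w ` {1..b} \<subseteq> {1..b}"
  proof
    fix y assume "y \<in> word_perm w ` {1..b}"
    then obtain k where "k \<in> {1..b}" "y = u ! (k - 1)"
      using len len_u w by (auto simp: word_perm_def nth_append)
    then show "y \<in> {1..b}"
      using len_u u nth_mem[of "k - 1" u] by auto
  qed
  then have "word_perm w ` {1..b} = {1..b}"
    using permutes_inj_on[OF perm] by (intro endo_inj_surj) auto
  moreover have "word_perm w k = k" if "k \<in> {b<..m - b}" for k
    using that len len_u w by (auto simp: word_perm_def nth_append)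
  ultimately show ?thesis
    using perm by (simp add: block_perm_def)
qed

lemma distinct_perm_word:
  assumes "\<sigma> permutes {1..n}"
  shows "distinct (perm_word n \<sigma>)"
  using permutes_inj_on[OF assms] by (simp add: perm_word_def distinct_map)

lemma set_perm_word:
  assumes "\<sigma> permutes {1..n}"
  shows "set (perm_word n \<sigma>) = {1..n}"
proof -
  have "set [1..<n + 1] = {1..n}"
    by auto
  then show ?thesis
    unfolding perm_word_def set_map using permutes_image[OF assms] by simp
qed

lemma upt_append: "i \<le> j \<Longrightarrow> j \<le> k \<Longrightarrow> [i..<j] @ [j..<k] = [i..<k]"
  using upt_add_eq_append[of i j "k - j"] by simp

lemma perm_word_block_word:
  assumes "block_perm n a \<sigma>" and "2 * a \<le> n"
  shows "block_word a (n - a) (perm_word n \<sigma>)"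
proof -
  have "[1..<Suc n] = [1..<Suc a] @ [Suc a..<Suc n]"
    using assms(2) by (simp add: upt_append del: upt_Suc)
  also have "[Suc a..<Suc n] = [Suc a..<Suc (n - a)] @ [Suc (n - a)..<Suc n]"
    using assms(2) by (simp add: upt_append del: upt_Suc)
  finally have "[1..<Suc n] = [1..<Suc a] @ [Suc a..<Suc (n - a)] @ [Suc (n - a)..<Suc n]" .
  moreover have "map \<sigma> [Suc a..<Suc (n - a)] = [Suc a..<Suc (n - a)]"
    using assms(1) by (intro map_idI) (auto simp: block_perm_def)
  ultimately have "perm_word n \<sigma> =
      map \<sigma> [1..<Suc a] @ [Suc a..<Suc (n - a)] @ map \<sigma> [Suc (n - a)..<Suc n]"
    by (simp add: perm_word_def del: upt_Suc)
  moreover have "set [1..<Suc a] = {1..a}"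
    by auto
  then have "set (map \<sigma> [1..<Suc a]) = {1..a}"
    using assms(1) unfolding set_map by (simp add: block_perm_def)
  ultimately show ?thesis
    unfolding block_word_def by blast
qed

lemma concat_map_subst_var_upt:
  "concat (map (subst_var i) [c..<d]) =
     (if i < c then [Suc c..<Suc d] else if i < d then [c..<Suc d] else [c..<d])"
  by (induction d) (auto simp: subst_var_def)

lemma concat_map_subst_var_below:
  "(\<And>j. j \<in> set w \<Longrightarrow> j < i) \<Longrightarrow> concat (map (subst_var i) w) = w"
  by (induction w) (auto simp: subst_var_def)

lemma set_concat_map_subst_var:
  assumes "set w = {1..n}" and "1 \<le> i" and "i \<le> n"
  shows "set (concat (map (subst_var i) w)) = {1..Suc n}"
proof -
  have "set w = set [1..<Suc n]"
    using assms(1) by (simp only: atLeastAtMost_upt)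
  then have "set (concat (map (subst_var i) w)) = set (concat (map (subst_var i) [1..<Suc n]))"
    by (simp only: set_concat set_map)
  also have "\<dots> = {1..Suc n}"
    using assms(2,3) by (simp add: concat_map_subst_var_upt atLeastAtMost_upt del: upt_Suc)
  finally show ?thesis .
qed

lemma distinct_concat_map_subst_var:
  "distinct w \<Longrightarrow> distinct (concat (map (subst_var i) w))"
proof (induction w)
  case (Cons j w)
  have "set (subst_var i j) \<inter> set (concat (map (subst_var i) w)) = {}"
    using Cons.prems by (auto simp: subst_var_def split: if_splits)
  with Cons show ?case
    by (simp add: subst_var_def)
qed simp

lemma block_word_Cons_map_Suc:
  assumes "block_word a c w" and "a < c"
  shows "block_word (Suc a) c (1 # map Suc w)"
proof -
  obtain u v where w: "w = u @ [Suc a..<Suc c] @ v" and u: "set u = {1..a}"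
    using assms(1) by (auto simp: block_word_def)
  have "1 # map Suc w = (1 # map Suc u) @ [Suc (Suc a)..<Suc c] @ Suc c # map Suc v"
    using assms(2) by (simp add: w map_Suc_upt)
  moreover have "set (1 # map Suc u) = {1..Suc a}"
    using u by auto
  ultimately show ?thesis
    unfolding block_word_def by blast
qed

lemma block_word_snoc:
  assumes "block_word a c w" and "a < c"
  shows "block_word (Suc a) c (w @ [x])"
proof -
  obtain u v where w: "w = u @ [Suc a..<Suc c] @ v" and u: "set u = {1..a}"
    using assms(1) by (auto simp: block_word_def)
  have "w @ [x] = (u @ [Suc a]) @ [Suc (Suc a)..<Suc c] @ v @ [x]"
    using assms(2) by (simp add: w upt_conv_Cons del: upt_Suc)
  moreover have "set (u @ [Suc a]) = {1..Suc a}"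
    using u by auto
  ultimately show ?thesis
    unfolding block_word_def by blast
qed

lemma block_word_concat_map_subst_var:
  assumes "block_word a c w" and "a < c" and "1 \<le> i"
  shows "block_word (Suc a) c (concat (map (subst_var i) w))"
proof -
  obtain u v where w: "w = u @ [Suc a..<Suc c] @ v" and u: "set u = {1..a}"
    using assms(1) by (auto simp: block_word_def)
  let ?S = "\<lambda>xs. concat (map (subst_var i) xs)"
  have S_w: "?S w = ?S u @ ?S [Suc a..<Suc c] @ ?S v"
    by (simp add: w)
  show ?thesis
  proof (cases "i \<le> a")
    case True
    have "?S [Suc a..<Suc c] = [Suc (Suc a)..<Suc (Suc c)]"
      using True by (simp add: concat_map_subst_var_upt del: upt_Suc)
    also have "\<dots> = [Suc (Suc a)..<Suc c] @ [Suc c]"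
      using assms(2) by (intro upt_Suc_append) simp
    finally have "?S [Suc a..<Suc c] = [Suc (Suc a)..<Suc c] @ [Suc c]" .
    moreover have "set (?S u) = {1..Suc a}"
      using u assms(3) True by (rule set_concat_map_subst_var)
    ultimately show ?thesis
      unfolding block_word_def S_w by (metis append.assoc append_Cons append_Nil)
  next
    case False
    define d where "d = (if i < Suc c then Suc (Suc c) else Suc c)"
    have "?S [Suc a..<Suc c] = [Suc a..<d]"
      using False by (simp add: d_def concat_map_subst_var_upt del: upt_Suc)
    also have "\<dots> = Suc a # [Suc (Suc a)..<Suc c] @ [Suc c..<d]"
      using assms(2) by (simp add: d_def upt_conv_Cons upt_append del: upt_Suc)
    finally have "?S [Suc a..<Suc c] = Suc a # [Suc (Suc a)..<Suc c] @ [Suc c..<d]" .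
    moreover have "?S u = u"
      using u False by (intro concat_map_subst_var_below) auto
    moreover have "set (u @ [Suc a]) = {1..Suc a}"
      using u by auto
    ultimately show ?thesis
      unfolding block_word_def S_w by (metis append.assoc append_Cons append_Nil)
  qed
qed

lemma T_word_block_word:
  assumes "block_word a c (perm_word n \<sigma>)" and "a < c"
  shows "block_word (Suc a) c (T_word n i \<sigma>)"
proof -
  consider "i = 0" | "i = n + 1" | "1 \<le> i" "i \<noteq> n + 1"
    by linarith
  then show ?thesis
  proof cases
    case 1
    then show ?thesis using block_word_Cons_map_Suc[OF assms] by (simp add: T_word_def)
  next
    case 2
    then show ?thesis using block_word_snoc[OF assms] by (simp add: T_word_def)
  next
    case 3
    then show ?thesis using block_word_concat_map_subst_var[OF assms] by (simp add: T_word_def)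
  qed
qed

lemma set_T_word:
  assumes "\<sigma> permutes {1..n}" and "i \<le> n + 1"
  shows "set (T_word n i \<sigma>) = {1..n + 1}"
  using set_perm_word[OF assms(1)] set_concat_map_subst_var[of "perm_word n \<sigma>" n i] assms(2)
  by (auto simp: T_word_def)

lemma distinct_T_word:
  assumes "\<sigma> permutes {1..n}"
  shows "distinct (T_word n i \<sigma>)"
  using distinct_perm_word[OF assms] set_perm_word[OF assms]
  by (auto simp: T_word_def distinct_map distinct_concat_map_subst_var)

theorem lemma2p16:
  fixes a n i :: nat and \<sigma> :: "nat \<Rightarrow> nat"
  assumes "a \<ge> 1"
    and "n \<ge> 2 * a + 1"
    and "\<sigma> \<in> S_sub n a"
    and "i \<le> n + 1"
  shows "T_perm n i \<sigma> \<in> S_sub (n + 1) (a + 1)"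
proof -
  have "2 * a \<le> n" and "a < n - a"
    using assms(2) by auto
  have \<sigma>: "block_perm n a \<sigma>"
    using assms(3) \<open>2 * a \<le> n\<close> by (rule S_sub_imp_block_perm)
  then have perm: "\<sigma> permutes {1..n}"
    by (simp add: block_perm_def)
  define w where "w = T_word n i \<sigma>"
  have "distinct w" and "set w = {1..n + 1}"
    unfolding w_def using perm assms(4) by (simp_all add: distinct_T_word set_T_word)
  moreover have "block_word (a + 1) (n + 1 - (a + 1)) w"
    using T_word_block_word[OF perm_word_block_word[OF \<sigma> \<open>2 * a \<le> n\<close>] \<open>a < n - a\<close>]
    by (simp add: w_def)
  ultimately have "block_perm (n + 1) (a + 1) (word_perm w)"
    by (rule word_perm_block_perm)
  moreover have "T_perm n i \<sigma> = word_perm w"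
    using distinct_card[OF \<open>distinct w\<close>] \<open>set w = {1..n + 1}\<close>
    by (simp add: fun_eq_iff T_perm_def word_perm_def w_def)
  ultimately show ?thesis
    using assms(2) by (simp add: block_perm_imp_S_sub)
qed

end
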